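(* Let $\varepsilon\in(0,\frac12)$. For all sufficiently large $n$ and all $k\le n$, $$|\mathsf{FewBranchHSW}^n_k|\le\exp\big(8n^{1/2-\varepsilon}\log n\big)\,\mu^k .$$
   Context: On $\mathbb{Z}^2$ with connective constant $\mu$, $\mathsf{HSW}_k$ denotes half-space walks of length $k$ (self-avoiding, $\gamma_0=O$, $y(\gamma_t)>0$ for $t>0$). Branch decomposition of $\gamma\in\mathsf{HSW}_k$: set $a_0=0$; for $i\ge1$ odd let $a_i$ be the largest $t\in[a_{i-1},k]$ with $y(\gamma_t)=\max_{s\in[a_{i-1},k]}y(\gamma_s)$, and for $i\ge2$ even let $a_i$ be the largest $t\in[a_{i-1},k]$ with $y(\gamma_t)=\min_{s\in[a_{i-1},k]}y(\gamma_s)$; stop at the first $r$ with $a_r=k$. The subwalks $\gamma_{[a_{i},a_{i+1}]}$, $0\le i<r$, are the branches of $\gamma$, and $r$ is its number of branches. $\mathsf{FewBranchHSW}^n_k$ is the set of $\gamma\in\mathsf{HSW}_k$ with fewer than $7n^{1/2-\varepsilon}$ branches. *)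

theory Defs
  imports Complex_Main
begin

type_synonym pt = "int \<times> int"

definition adj :: "pt \<Rightarrow> pt \<Rightarrow> bool" where
  "adj p q \<longleftrightarrow> \<bar>fst p - fst q\<bar> + \<bar>snd p - snd q\<bar> = 1"

text \<open>A walk of length k is a list of k+1 points gamma_0,...,gamma_k.\<close>
definition SAW :: "nat \<Rightarrow> pt list set" where
  "SAW k = {\<gamma>. length \<gamma> = Suc k \<and> \<gamma> ! 0 = (0,0) \<and>
      (\<forall>t<k. adj (\<gamma> ! t) (\<gamma> ! Suc t)) \<and> distinct \<gamma>}"

definition conn_const :: real where
  "conn_const = lim (\<lambda>n. root n (real (card (SAW n))))"

definition HSW :: "nat \<Rightarrow> pt list set" where
  "HSW k = {\<gamma> \<in> SAW k. \<forall>t. 0 < t \<and> t \<le> k \<longrightarrow> snd (\<gamma> ! t) > 0}"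

fun bpt :: "pt list \<Rightarrow> nat \<Rightarrow> nat" where
  "bpt \<gamma> 0 = 0"
| "bpt \<gamma> (Suc i) =
    (let a = bpt \<gamma> i; k = length \<gamma> - 1; y = (\<lambda>s. snd (\<gamma> ! s));
         m = (if odd (Suc i) then Max (y ` {a..k}) else Min (y ` {a..k}))
     in GREATEST t. a \<le> t \<and> t \<le> k \<and> y t = m)"

definition num_branches :: "pt list \<Rightarrow> nat" where
  "num_branches \<gamma> = (LEAST r. bpt \<gamma> r = length \<gamma> - 1)"

definition FewBranchHSW :: "real \<Rightarrow> nat \<Rightarrow> nat \<Rightarrow> pt list set" where
  "FewBranchHSW \<epsilon> n k = {\<gamma> \<in> HSW k. real (num_branches \<gamma>) < 7 * real n powr (1/2 - \<epsilon>)}"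

end

theory Submission
  imports Defs "HOL-Library.Product_Plus" "HOL-Real_Asymp.Real_Asymp"
begin

(* Unfold a half-space walk by reflecting each odd-numbered branch vertically (and translating
  the pieces so that they join up).  Each branch runs from a height record of the rest of the walk
  to its last maximum or minimum, so the unfolded walk is a bridge of the same length; together
  with the list of branch points it determines the walk.  Hence a walk of length k with at most
  N branches has at most (k + 2)^N |Bridge k| codes.  Bridges concatenate, so
  |Bridge m|^j \<le> |Bridge (m j)| \<le> |SAW (m j)|, and Fekete's lemma for the submultiplicative
  sequence |SAW n| gives |Bridge m| \<le> mu^m.  Finally N \<le> 7 n^(1/2 - eps), and
  (n + 2)^N is eventually at most exp (8 n^(1/2 - eps) log n). *)

lemma distinct_if_nth_neq:
  assumes "\<And>u v. u < v \<Longrightarrow> v < length xs \<Longrightarrow> xs ! u \<noteq> xs ! v"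
  shows "distinct xs"
  unfolding distinct_conv_nth by (metis assms linorder_neqE_nat)

lemma SAWD:
  assumes "\<gamma> \<in> SAW k"
  shows "length \<gamma> = Suc k" "\<gamma> ! 0 = (0, 0)" "\<And>t. t < k \<Longrightarrow> adj (\<gamma> ! t) (\<gamma> ! Suc t)" "distinct \<gamma>"
  using assms by (auto simp: SAW_def)

lemma HSW_pos: "\<gamma> \<in> HSW k \<Longrightarrow> 0 < t \<Longrightarrow> t \<le> k \<Longrightarrow> 0 < snd (\<gamma> ! t)"
  by (simp add: HSW_def)

(* The factor (-1)^i turns the minimum taken for even Suc i into a maximum. *)
lemma bpt_Suc_extremal:
  fixes \<gamma> :: "pt list" and i :: nat
  defines "k \<equiv> length \<gamma> - 1" and "\<sigma> \<equiv> (-1::int) ^ i"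
  assumes "bpt \<gamma> i \<le> k"
  shows "bpt \<gamma> i \<le> bpt \<gamma> (Suc i) \<and> bpt \<gamma> (Suc i) \<le> k
     \<and> (\<forall>u. bpt \<gamma> i \<le> u \<and> u \<le> k \<longrightarrow> \<sigma> * snd (\<gamma> ! u) \<le> \<sigma> * snd (\<gamma> ! bpt \<gamma> (Suc i)))
     \<and> (\<forall>u. bpt \<gamma> (Suc i) < u \<and> u \<le> k \<longrightarrow> \<sigma> * snd (\<gamma> ! u) < \<sigma> * snd (\<gamma> ! bpt \<gamma> (Suc i)))"
proof -
  define a where "a = bpt \<gamma> i"
  define y where "y = (\<lambda>s. snd (\<gamma> ! s))"
  define m where "m = (if odd (Suc i) then Max (y ` {a..k}) else Min (y ` {a..k}))"
  have bpt_eq: "bpt \<gamma> (Suc i) = (GREATEST t. a \<le> t \<and> t \<le> k \<and> y t = m)"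
    by (simp add: a_def m_def k_def y_def Let_def)
  have fin: "finite (y ` {a..k})" and "y ` {a..k} \<noteq> {}"
    using assms(3) by (auto simp: a_def)
  then have "m \<in> y ` {a..k}" by (simp add: m_def)
  then obtain t0 where t0: "a \<le> t0" "t0 \<le> k" "y t0 = m" by auto
  have attained: "a \<le> bpt \<gamma> (Suc i) \<and> bpt \<gamma> (Suc i) \<le> k \<and> y (bpt \<gamma> (Suc i)) = m"
    unfolding bpt_eq by (rule GreatestI_nat[of _ t0 k]) (use t0 in auto)
  have last: "\<And>t. a \<le> t \<Longrightarrow> t \<le> k \<Longrightarrow> y t = m \<Longrightarrow> t \<le> bpt \<gamma> (Suc i)"
    unfolding bpt_eq by (rule Greatest_le_nat[of _ _ k]) auto
  have extremal: "\<forall>u. a \<le> u \<and> u \<le> k \<longrightarrow> \<sigma> * y u \<le> \<sigma> * m"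
  proof (cases "even i")
    case True
    then have "\<sigma> = 1" "m = Max (y ` {a..k})" by (simp_all add: \<sigma>_def m_def)
    then show ?thesis using fin by auto
  next
    case False
    then have "\<sigma> = -1" "m = Min (y ` {a..k})" by (simp_all add: \<sigma>_def m_def)
    then show ?thesis using fin by auto
  qed
  have strict: "\<forall>u. bpt \<gamma> (Suc i) < u \<and> u \<le> k \<longrightarrow> \<sigma> * y u < \<sigma> * m"
  proof (intro allI impI)
    fix u assume "bpt \<gamma> (Suc i) < u \<and> u \<le> k"
    then have "\<sigma> * y u \<le> \<sigma> * m" "y u \<noteq> m" using attained extremal last[of u] by auto
    moreover have "\<sigma> = 1 \<or> \<sigma> = -1" by (simp add: \<sigma>_def minus_one_power_iff)
    ultimately show "\<sigma> * y u < \<sigma> * m" by auto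
  qed
  show ?thesis using attained extremal strict by (auto simp: a_def y_def)
qed

declare bpt.simps(2)[simp del]

lemma bpt_le_last: "bpt \<gamma> i \<le> length \<gamma> - 1"
  by (induction i) (use bpt_Suc_extremal in auto)

lemma bpt_Suc_ge: "bpt \<gamma> i \<le> bpt \<gamma> (Suc i)"
  using bpt_Suc_extremal[of \<gamma> i] bpt_le_last[of \<gamma> i] by auto

lemma bpt_mono: "i \<le> j \<Longrightarrow> bpt \<gamma> i \<le> bpt \<gamma> j"
  by (induction j rule: dec_induct) (auto intro: order_trans bpt_Suc_ge)

lemma bpt_Suc_extremum:
  "bpt \<gamma> i \<le> u \<Longrightarrow> u \<le> length \<gamma> - 1 \<Longrightarrow>
    (-1::int) ^ i * snd (\<gamma> ! u) \<le> (-1) ^ i * snd (\<gamma> ! bpt \<gamma> (Suc i))"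
  using bpt_Suc_extremal[of \<gamma> i] bpt_le_last[of \<gamma> i] by auto

lemma bpt_Suc_last_extremum:
  "bpt \<gamma> (Suc i) < u \<Longrightarrow> u \<le> length \<gamma> - 1 \<Longrightarrow>
    (-1::int) ^ i * snd (\<gamma> ! u) < (-1) ^ i * snd (\<gamma> ! bpt \<gamma> (Suc i))"
  using bpt_Suc_extremal[of \<gamma> i] bpt_le_last[of \<gamma> i] by auto

lemma bpt_less_bpt_Suc_Suc:
  assumes "bpt \<gamma> i < length \<gamma> - 1"
  shows "bpt \<gamma> i < bpt \<gamma> (Suc (Suc i))"
proof (rule ccontr)
  assume "\<not> ?thesis"
  then have "bpt \<gamma> (Suc i) = bpt \<gamma> i" "bpt \<gamma> (Suc (Suc i)) = bpt \<gamma> i"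
    using bpt_Suc_ge[of \<gamma> i] bpt_Suc_ge[of \<gamma> "Suc i"] by auto
  then have "(-1::int) ^ i * snd (\<gamma> ! (length \<gamma> - 1)) < (-1) ^ i * snd (\<gamma> ! bpt \<gamma> i)"
    and "(-1::int) ^ Suc i * snd (\<gamma> ! (length \<gamma> - 1)) \<le> (-1) ^ Suc i * snd (\<gamma> ! bpt \<gamma> i)"
    using bpt_Suc_last_extremum[of \<gamma> i] bpt_Suc_extremum[of \<gamma> "Suc i"] assms by auto
  then show False by simp
qed

lemma min_le_bpt_double: "min j (length \<gamma> - 1) \<le> bpt \<gamma> (2 * j)"
proof (induction j)
  case 0
  then show ?case by simp
next
  case (Suc j)
  show ?case
  proof (cases "bpt \<gamma> (2 * j) < length \<gamma> - 1")
    case True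
    then have "bpt \<gamma> (2 * j) < bpt \<gamma> (2 * Suc j)" using bpt_less_bpt_Suc_Suc[of \<gamma> "2 * j"] by simp
    then show ?thesis using Suc by linarith
  next
    case False
    moreover have "bpt \<gamma> (2 * j) \<le> bpt \<gamma> (2 * Suc j)" by (rule bpt_mono) simp
    ultimately show ?thesis using bpt_le_last[of \<gamma> "2 * j"] by linarith
  qed
qed

lemma bpt_num_branches: "bpt \<gamma> (num_branches \<gamma>) = length \<gamma> - 1"
proof -
  have "bpt \<gamma> (2 * (length \<gamma> - 1)) = length \<gamma> - 1"
    using min_le_bpt_double[of "length \<gamma> - 1" \<gamma>] bpt_le_last[of \<gamma>] by (metis le_antisym min.idem)
  then show ?thesis unfolding num_branches_def by (rule LeastI)
qed

lemma bpt_beyond_num_branches: "num_branches \<gamma> \<le> i \<Longrightarrow> bpt \<gamma> i = length \<gamma> - 1"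
  using bpt_mono[of "num_branches \<gamma>" i \<gamma>] bpt_num_branches[of \<gamma>] bpt_le_last[of \<gamma> i] by auto

lemma branch_containing:
  assumes "0 < t" "t \<le> length \<gamma> - 1"
  obtains i where "bpt \<gamma> i < t" "t \<le> bpt \<gamma> (Suc i)"
proof -
  define j where "j = (LEAST j. t \<le> bpt \<gamma> j)"
  have j: "t \<le> bpt \<gamma> j"
    unfolding j_def using bpt_num_branches[of \<gamma>] assms(2) by (metis LeastI)
  then obtain i where "j = Suc i" using assms(1) by (cases j) auto
  moreover have "\<not> t \<le> bpt \<gamma> i"
    using not_less_Least[of i "\<lambda>j. t \<le> bpt \<gamma> j"] by (simp add: j_def[symmetric] \<open>j = Suc i\<close>)
  ultimately show ?thesis using that[of i] j by (simp add: not_le)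
qed

definition branch_points :: "pt list \<Rightarrow> nat list" where
  "branch_points \<gamma> = map (bpt \<gamma>) [1..<Suc (num_branches \<gamma>)]"

definition step_sign :: "pt list \<Rightarrow> nat \<Rightarrow> int" where
  "step_sign \<gamma> u = (-1) ^ length (filter (\<lambda>a. a \<le> u) (branch_points \<gamma>))"

definition unfolded_height :: "pt list \<Rightarrow> nat \<Rightarrow> int" where
  "unfolded_height \<gamma> t = (\<Sum>u<t. step_sign \<gamma> u * (snd (\<gamma> ! Suc u) - snd (\<gamma> ! u)))"

definition unfold_branches :: "pt list \<Rightarrow> pt list" where
  "unfold_branches \<gamma> = map (\<lambda>t. (fst (\<gamma> ! t), unfolded_height \<gamma> t)) [0..<length \<gamma>]"

definition Bridge :: "nat \<Rightarrow> pt list set" where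
  "Bridge k = {\<beta> \<in> SAW k. \<forall>t. 0 < t \<and> t \<le> k \<longrightarrow> 0 < snd (\<beta> ! t) \<and> snd (\<beta> ! t) \<le> snd (\<beta> ! k)}"

lemma step_sign_on_branch:
  assumes "bpt \<gamma> i \<le> u" "u < bpt \<gamma> (Suc i)"
  shows "step_sign \<gamma> u = (-1) ^ i"
proof -
  let ?r = "num_branches \<gamma>"
  have "i < ?r"
    using bpt_beyond_num_branches[of \<gamma> i] bpt_beyond_num_branches[of \<gamma> "Suc i"] assms by fastforce
  have "length (filter (\<lambda>a. a \<le> u) (branch_points \<gamma>)) = card {j. j < ?r \<and> bpt \<gamma> (Suc j) \<le> u}"
    unfolding length_filter_conv_card by (rule arg_cong[where f = card]) (auto simp: branch_points_def simp del: upt_Suc)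
  also have "{j. j < ?r \<and> bpt \<gamma> (Suc j) \<le> u} = {..<i}"
  proof (intro set_eqI iffI)
    fix j assume "j \<in> {j. j < ?r \<and> bpt \<gamma> (Suc j) \<le> u}"
    then show "j \<in> {..<i}" using bpt_mono[of "Suc i" "Suc j" \<gamma>] assms(2) by (cases "i \<le> j") auto
  next
    fix j assume "j \<in> {..<i}"
    then show "j \<in> {j. j < ?r \<and> bpt \<gamma> (Suc j) \<le> u}"
      using \<open>i < ?r\<close> bpt_mono[of "Suc j" i \<gamma>] assms(1) by auto
  qed
  finally show ?thesis by (simp add: step_sign_def)
qed

lemma unfolded_height_on_branch:
  assumes "bpt \<gamma> i \<le> t" "t \<le> bpt \<gamma> (Suc i)"
  shows "unfolded_height \<gamma> t = unfolded_height \<gamma> (bpt \<gamma> i) + (-1) ^ i * (snd (\<gamma> ! t) - snd (\<gamma> ! bpt \<gamma> i))"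
  using assms
proof (induction t rule: dec_induct)
  case base
  then show ?case by simp
next
  case (step t)
  then have "step_sign \<gamma> t = (-1) ^ i" by (intro step_sign_on_branch) auto
  then show ?case using step by (simp add: unfolded_height_def algebra_simps)
qed

lemma unfolded_height_le_bpt_Suc:
  assumes "bpt \<gamma> i \<le> t" "t \<le> bpt \<gamma> (Suc i)"
  shows "unfolded_height \<gamma> t \<le> unfolded_height \<gamma> (bpt \<gamma> (Suc i))"
proof -
  have "(-1::int) ^ i * snd (\<gamma> ! t) \<le> (-1) ^ i * snd (\<gamma> ! bpt \<gamma> (Suc i))"
    using bpt_Suc_extremum[of \<gamma> i t] bpt_le_last[of \<gamma> "Suc i"] assms by simp
  then show ?thesis
    using unfolded_height_on_branch[OF assms] unfolded_height_on_branch[of \<gamma> i "bpt \<gamma> (Suc i)"]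
      bpt_Suc_ge[of \<gamma> i] by (simp add: algebra_simps)
qed

lemma unfolded_height_gt_bpt:
  assumes "\<gamma> \<in> HSW k" "bpt \<gamma> i < t" "t \<le> bpt \<gamma> (Suc i)"
  shows "unfolded_height \<gamma> (bpt \<gamma> i) < unfolded_height \<gamma> t"
proof -
  have len: "length \<gamma> = Suc k" using SAWD(1) assms(1) by (simp add: HSW_def)
  then have "t \<le> k" using assms(3) bpt_le_last[of \<gamma> "Suc i"] by simp
  have "0 < (-1::int) ^ i * (snd (\<gamma> ! t) - snd (\<gamma> ! bpt \<gamma> i))"
  proof (cases i)
    case 0
    then show ?thesis using HSW_pos[OF assms(1)] SAWD(2) assms(1,2) \<open>t \<le> k\<close> by (simp add: HSW_def)
  next
    case (Suc j)
    then show ?thesis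
      using bpt_Suc_last_extremum[of \<gamma> j t] len assms(2) \<open>t \<le> k\<close> by (simp add: algebra_simps)
  qed
  then show ?thesis using unfolded_height_on_branch[of \<gamma> i t] assms(2,3) by simp
qed

lemma unfolded_height_le_bpt: "u \<le> bpt \<gamma> i \<Longrightarrow> unfolded_height \<gamma> u \<le> unfolded_height \<gamma> (bpt \<gamma> i)"
proof (induction i arbitrary: u)
  case 0
  then show ?case by simp
next
  case (Suc i)
  show ?case
  proof (cases "u \<le> bpt \<gamma> i")
    case True
    then have "unfolded_height \<gamma> u \<le> unfolded_height \<gamma> (bpt \<gamma> i)" by (rule Suc.IH)
    also have "\<dots> \<le> unfolded_height \<gamma> (bpt \<gamma> (Suc i))"
      by (rule unfolded_height_le_bpt_Suc) (simp_all add: bpt_Suc_ge)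
    finally show ?thesis .
  next
    case False
    then show ?thesis using Suc.prems by (intro unfolded_height_le_bpt_Suc) auto
  qed
qed

lemma unfolded_height_le_last:
  "t \<le> length \<gamma> - 1 \<Longrightarrow> unfolded_height \<gamma> t \<le> unfolded_height \<gamma> (length \<gamma> - 1)"
  using unfolded_height_le_bpt[of t \<gamma> "num_branches \<gamma>"] bpt_num_branches[of \<gamma>] by simp

lemma unfolded_height_pos:
  assumes "\<gamma> \<in> HSW k" "0 < t" "t \<le> k"
  shows "0 < unfolded_height \<gamma> t"
proof -
  have "length \<gamma> = Suc k" using assms(1) SAWD(1) by (simp add: HSW_def)
  obtain i where i: "bpt \<gamma> i < t" "t \<le> bpt \<gamma> (Suc i)"
    by (rule branch_containing[of t \<gamma>]) (use assms \<open>length \<gamma> = Suc k\<close> in simp_all)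
  have "unfolded_height \<gamma> 0 \<le> unfolded_height \<gamma> (bpt \<gamma> i)" by (rule unfolded_height_le_bpt) simp
  also have "\<dots> < unfolded_height \<gamma> t" using unfolded_height_gt_bpt[OF assms(1) i] .
  finally show ?thesis by (simp add: unfolded_height_def)
qed

lemma unfolded_height_separates:
  assumes "\<gamma> \<in> HSW k" "u < v" "v \<le> k"
  shows "(fst (\<gamma> ! u), unfolded_height \<gamma> u) \<noteq> (fst (\<gamma> ! v), unfolded_height \<gamma> v)"
proof -
  have \<gamma>: "\<gamma> \<in> SAW k" using assms(1) by (simp add: HSW_def)
  obtain i where i: "bpt \<gamma> i < v" "v \<le> bpt \<gamma> (Suc i)"
    by (rule branch_containing[of v \<gamma>]) (use assms SAWD(1)[OF \<gamma>] in simp_all)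
  show ?thesis
  proof (cases "u \<le> bpt \<gamma> i")
    case True
    then have "unfolded_height \<gamma> u < unfolded_height \<gamma> v"
      using unfolded_height_le_bpt unfolded_height_gt_bpt[OF assms(1) i] by (meson le_less_trans)
    then show ?thesis by simp
  next
    case False
    then have "unfolded_height \<gamma> u - unfolded_height \<gamma> v = (-1) ^ i * (snd (\<gamma> ! u) - snd (\<gamma> ! v))"
      using unfolded_height_on_branch[of \<gamma> i u] unfolded_height_on_branch[of \<gamma> i v] i assms(2)
      by (simp add: algebra_simps)
    moreover have "\<gamma> ! u \<noteq> \<gamma> ! v" using SAWD[OF \<gamma>] assms(2,3) by (simp add: nth_eq_iff_index_eq)
    ultimately show ?thesis by (auto simp: prod_eq_iff)
  qed
qed

lemma unfold_branches_Bridge: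
  assumes H: "\<gamma> \<in> HSW k"
  shows "unfold_branches \<gamma> \<in> Bridge k"
proof -
  have \<gamma>: "\<gamma> \<in> SAW k" using H by (simp add: HSW_def)
  note len = SAWD(1)[OF \<gamma>]
  let ?Y = "unfolded_height \<gamma>"
  have nth: "\<And>t. t \<le> k \<Longrightarrow> unfold_branches \<gamma> ! t = (fst (\<gamma> ! t), ?Y t)"
    using len by (simp add: unfold_branches_def less_Suc_eq_le del: upt_Suc)
  have len': "length (unfold_branches \<gamma>) = Suc k" using len by (simp add: unfold_branches_def)
  have steps: "adj (unfold_branches \<gamma> ! t) (unfold_branches \<gamma> ! Suc t)" if "t < k" for t
  proof -
    have "\<bar>?Y (Suc t) - ?Y t\<bar> = \<bar>snd (\<gamma> ! Suc t) - snd (\<gamma> ! t)\<bar>"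
      by (simp add: unfolded_height_def abs_mult step_sign_def power_abs)
    then show ?thesis using SAWD(3)[OF \<gamma> that] nth[of t] nth[of "Suc t"] that
      by (simp add: adj_def abs_minus_commute)
  qed
  have "distinct (unfold_branches \<gamma>)"
    by (rule distinct_if_nth_neq) (use unfolded_height_separates[OF H] nth len' in \<open>simp add: less_Suc_eq_le\<close>)
  moreover have "unfold_branches \<gamma> ! 0 = (0, 0)"
    using nth[of 0] SAWD(2)[OF \<gamma>] by (simp add: unfolded_height_def)
  ultimately show ?thesis
    unfolding Bridge_def SAW_def using len len' steps unfolded_height_le_last[of _ \<gamma>] unfolded_height_pos[OF H]
    by (auto simp: nth)
qed

lemma unfold_branches_inj:
  assumes \<gamma>: "\<gamma> \<in> SAW k" and \<gamma>': "\<gamma>' \<in> SAW k"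
    and "branch_points \<gamma> = branch_points \<gamma>'" and unf: "unfold_branches \<gamma> = unfold_branches \<gamma>'"
  shows "\<gamma> = \<gamma>'"
proof -
  note len = SAWD(1)[OF \<gamma>] SAWD(1)[OF \<gamma>']
  have sign: "step_sign \<gamma> = step_sign \<gamma>'" using assms(3) by (simp add: step_sign_def fun_eq_iff)
  have x: "fst (\<gamma> ! t) = fst (\<gamma>' ! t)" and Y: "unfolded_height \<gamma> t = unfolded_height \<gamma>' t"
    if "t \<le> k" for t
    using arg_cong[OF unf, of "\<lambda>xs. xs ! t"] that len by (simp_all add: unfold_branches_def less_Suc_eq_le del: upt_Suc)
  have y: "snd (\<gamma> ! t) = snd (\<gamma>' ! t)" if "t \<le> k" for t
    using that
  proof (induction t)
    case 0
    then show ?case using SAWD(2)[OF \<gamma>] SAWD(2)[OF \<gamma>'] by simp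
  next
    case (Suc t)
    have "step_sign \<gamma> t * (snd (\<gamma> ! Suc t) - snd (\<gamma> ! t)) = step_sign \<gamma> t * (snd (\<gamma>' ! Suc t) - snd (\<gamma>' ! t))"
      using Y[of t] Y[of "Suc t"] Suc.prems sign by (simp add: unfolded_height_def)
    moreover have "step_sign \<gamma> t \<noteq> 0" by (simp add: step_sign_def)
    ultimately show ?case using Suc by simp
  qed
  show ?thesis
    by (rule nth_equalityI) (use len x y in \<open>auto simp: prod_eq_iff less_Suc_eq_le\<close>)
qed

lemma adj_add_right [simp]: "adj (p + d) (q + d) = adj p q" for p q d :: pt
  by (simp add: adj_def)

lemma adj_diff_right [simp]: "adj (p - d) (q - d) = adj p q" for p q d :: pt
  by (simp add: adj_def)

lemma SAW_nth_abs_le: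
  assumes "\<gamma> \<in> SAW k" "t \<le> k"
  shows "\<bar>fst (\<gamma> ! t)\<bar> \<le> int t \<and> \<bar>snd (\<gamma> ! t)\<bar> \<le> int t"
  using assms(2)
proof (induction t)
  case 0
  then show ?case using SAWD(2)[OF assms(1)] by simp
next
  case (Suc t)
  then have "adj (\<gamma> ! t) (\<gamma> ! Suc t)" using SAWD(3)[OF assms(1)] by simp
  then show ?case using Suc by (auto simp: adj_def)
qed

lemma finite_SAW: "finite (SAW k)"
proof (rule finite_subset)
  let ?B = "{-int k..int k} \<times> {-int k..int k}"
  show "SAW k \<subseteq> {xs. set xs \<subseteq> ?B \<and> length xs = Suc k}"
  proof
    fix \<gamma> assume \<gamma>: "\<gamma> \<in> SAW k"
    have "p \<in> ?B" if p: "p \<in> set \<gamma>" for p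
    proof -
      obtain t where "t < length \<gamma>" "p = \<gamma> ! t" using p by (auto simp: in_set_conv_nth)
      moreover have "t \<le> k" using \<open>t < length \<gamma>\<close> SAWD(1)[OF \<gamma>] by simp
      ultimately show ?thesis using SAW_nth_abs_le[OF \<gamma>, of t] by (auto simp: mem_Times_iff abs_le_iff)
    qed
    then show "\<gamma> \<in> {xs. set xs \<subseteq> ?B \<and> length xs = Suc k}" using SAWD(1)[OF \<gamma>] by auto
  qed
  show "finite {xs. set xs \<subseteq> ?B \<and> length xs = Suc k}"
    by (rule finite_lists_length_eq) simp
qed

lemma SAW_0: "SAW 0 = {[(0, 0)]}"
  by (auto simp: SAW_def length_Suc_conv)

lemma take_Suc_SAW: "\<gamma> \<in> SAW (m + n) \<Longrightarrow> take (Suc m) \<gamma> \<in> SAW m"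
  by (simp add: SAW_def)

lemma shifted_drop_SAW:
  assumes "\<gamma> \<in> SAW (m + n)"
  shows "map (\<lambda>p. p - \<gamma> ! m) (drop m \<gamma>) \<in> SAW n"
  unfolding SAW_def
proof (intro CollectI conjI allI impI)
  note \<gamma> = SAWD[OF assms]
  show "length (map (\<lambda>p. p - \<gamma> ! m) (drop m \<gamma>)) = Suc n"
    and "map (\<lambda>p. p - \<gamma> ! m) (drop m \<gamma>) ! 0 = (0, 0)"
    and "distinct (map (\<lambda>p. p - \<gamma> ! m) (drop m \<gamma>))"
    using \<gamma>(1,4) by (simp_all add: zero_prod_def distinct_map inj_on_def)
  show "adj (map (\<lambda>p. p - \<gamma> ! m) (drop m \<gamma>) ! t) (map (\<lambda>p. p - \<gamma> ! m) (drop m \<gamma>) ! Suc t)"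
    if "t < n" for t
    using that \<gamma>(1) \<gamma>(3)[of "m + t"] by simp
qed

lemma card_SAW_add_le: "card (SAW (m + n)) \<le> card (SAW m) * card (SAW n)"
proof -
  define split where "split = (\<lambda>\<gamma>::pt list. (take (Suc m) \<gamma>, map (\<lambda>p. p - \<gamma> ! m) (drop m \<gamma>)))"
  have "split ` SAW (m + n) \<subseteq> SAW m \<times> SAW n"
    using take_Suc_SAW shifted_drop_SAW by (auto simp: split_def)
  moreover have "inj_on split (SAW (m + n))"
  proof (rule inj_onI)
    fix \<gamma> \<gamma>' assume "\<gamma> \<in> SAW (m + n)" "\<gamma>' \<in> SAW (m + n)" and eq: "split \<gamma> = split \<gamma>'"
    then have take_eq: "take (Suc m) \<gamma> = take (Suc m) \<gamma>'"
      and drop_eq: "map (\<lambda>p. p - \<gamma> ! m) (drop m \<gamma>) = map (\<lambda>p. p - \<gamma>' ! m) (drop m \<gamma>')"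
      by (simp_all add: split_def)
    have "\<gamma> ! m = \<gamma>' ! m" using arg_cong[OF take_eq, of "\<lambda>xs. xs ! m"] by simp
    moreover have "inj (\<lambda>p. p - \<gamma> ! m)" by (rule injI) simp
    ultimately have "drop m \<gamma> = drop m \<gamma>'" using drop_eq by (simp add: inj_map_eq_map)
    moreover have "take m \<gamma> = take m \<gamma>'" using arg_cong[OF take_eq, of "take m"] by simp
    ultimately show "\<gamma> = \<gamma>'" by (metis append_take_drop_id)
  qed
  ultimately have "card (SAW (m + n)) \<le> card (SAW m \<times> SAW n)"
    by (intro card_inj_on_le) (simp_all add: finite_SAW)
  then show ?thesis by (simp add: card_cartesian_product)
qed

definition walk_concat :: "pt list \<Rightarrow> pt list \<Rightarrow> pt list" where
  "walk_concat \<beta> \<beta>' = \<beta> @ map (\<lambda>p. p + last \<beta>) (tl \<beta>')"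

lemma walk_concat_nth_le: "length \<beta> = Suc m \<Longrightarrow> t \<le> m \<Longrightarrow> walk_concat \<beta> \<beta>' ! t = \<beta> ! t"
  by (simp add: walk_concat_def nth_append)

lemma walk_concat_nth_ge:
  assumes "length \<beta> = Suc m" "length \<beta>' = Suc n" "\<beta>' ! 0 = (0, 0)" "m \<le> t" "t \<le> m + n"
  shows "walk_concat \<beta> \<beta>' ! t = \<beta>' ! (t - m) + \<beta> ! m"
proof (cases "t = m")
  case True
  then show ?thesis using assms by (simp add: walk_concat_def nth_append zero_prod_def[symmetric])
next
  case False
  have "last \<beta> = \<beta> ! m" using assms(1) last_conv_nth[of \<beta>] by fastforce
  moreover have "tl \<beta>' ! (t - Suc m) = \<beta>' ! (t - m)"
    using False assms by (simp add: nth_tl Suc_diff_Suc)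
  ultimately show ?thesis using False assms by (simp add: walk_concat_def nth_append)
qed

lemma BridgeD:
  assumes "\<beta> \<in> Bridge k"
  shows "\<beta> \<in> SAW k" "length \<beta> = Suc k" "\<beta> ! 0 = (0, 0)"
    "\<And>t. 0 < t \<Longrightarrow> t \<le> k \<Longrightarrow> 0 < snd (\<beta> ! t)"
    "\<And>t. t \<le> k \<Longrightarrow> 0 \<le> snd (\<beta> ! t)" "\<And>t. t \<le> k \<Longrightarrow> snd (\<beta> ! t) \<le> snd (\<beta> ! k)"
proof -
  show \<beta>: "\<beta> \<in> SAW k" using assms by (simp add: Bridge_def)
  show "length \<beta> = Suc k" and start: "\<beta> ! 0 = (0, 0)" using SAWD[OF \<beta>] by simp_all
  show pos: "\<And>t. 0 < t \<Longrightarrow> t \<le> k \<Longrightarrow> 0 < snd (\<beta> ! t)" using assms by (simp add: Bridge_def)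
  fix t assume "t \<le> k"
  then show "0 \<le> snd (\<beta> ! t)" using pos[of t] start by (cases "t = 0") auto
  show "snd (\<beta> ! t) \<le> snd (\<beta> ! k)"
    using assms \<open>t \<le> k\<close> pos[of k] start by (cases "t = 0"; cases "k = 0") (auto simp: Bridge_def)
qed

lemma walk_concat_nth_neq:
  assumes "\<beta> \<in> Bridge m" "\<beta>' \<in> Bridge n" "u < v" "v \<le> m + n"
  shows "walk_concat \<beta> \<beta>' ! u \<noteq> walk_concat \<beta> \<beta>' ! v"
proof -
  note \<beta> = BridgeD[OF assms(1)] and \<beta>' = BridgeD[OF assms(2)]
  note low = walk_concat_nth_le[OF \<beta>(2)] and high = walk_concat_nth_ge[OF \<beta>(2) \<beta>'(2,3)]
  show ?thesis
  proof (cases "v \<le> m")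
    case True
    then show ?thesis using low SAWD(4)[OF \<beta>(1)] \<beta>(2) assms(3) by (simp add: nth_eq_iff_index_eq)
  next
    case False
    show ?thesis
    proof (cases "m \<le> u")
      case True
      then show ?thesis using high SAWD(4)[OF \<beta>'(1)] \<beta>'(2) assms(3,4) by (simp add: nth_eq_iff_index_eq)
    next
      case u: False
      \<comment> \<open>the first bridge stays weakly below its endpoint, the translated second one strictly above\<close>
      have "snd (walk_concat \<beta> \<beta>' ! u) \<le> snd (\<beta> ! m)" "0 < snd (\<beta>' ! (v - m))"
        using low[of u] \<beta>(6)[of u] \<beta>'(4)[of "v - m"] u False assms(4) by auto
      then show ?thesis using high[of v] False assms(4) by auto
    qed
  qed
qed

lemma walk_concat_Bridge:
  assumes "\<beta> \<in> Bridge m" "\<beta>' \<in> Bridge n"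
  shows "walk_concat \<beta> \<beta>' \<in> Bridge (m + n)"
proof -
  note \<beta> = BridgeD[OF assms(1)] and \<beta>' = BridgeD[OF assms(2)]
  note low = walk_concat_nth_le[OF \<beta>(2)] and high = walk_concat_nth_ge[OF \<beta>(2) \<beta>'(2,3)]
  let ?c = "walk_concat \<beta> \<beta>'"
  have len: "length ?c = Suc (m + n)" using \<beta>(2) \<beta>'(2) by (simp add: walk_concat_def)
  have steps: "adj (?c ! t) (?c ! Suc t)" if "t < m + n" for t
  proof (cases "t < m")
    case True
    then show ?thesis using low[of t] low[of "Suc t"] SAWD(3)[OF \<beta>(1)] by simp
  next
    case False
    then have "Suc t - m = Suc (t - m)" by auto
    then show ?thesis using high[of t] high[of "Suc t"] SAWD(3)[OF \<beta>'(1), of "t - m"] False that by simp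
  qed
  have top: "snd (?c ! (m + n)) = snd (\<beta>' ! n) + snd (\<beta> ! m)" using high[of "m + n"] by simp
  have "distinct ?c" by (intro distinct_if_nth_neq walk_concat_nth_neq[OF assms]) (simp_all add: len)
  moreover have "0 < snd (?c ! t) \<and> snd (?c ! t) \<le> snd (?c ! (m + n))" if "0 < t" "t \<le> m + n" for t
  proof (cases "t \<le> m")
    case True
    then show ?thesis using top low[of t] \<beta>(4)[of t] \<beta>(6)[of t] \<beta>'(5)[of n] that by simp
  next
    case False
    then have "snd (?c ! t) = snd (\<beta>' ! (t - m)) + snd (\<beta> ! m)" using high[of t] that by simp
    moreover have "0 < snd (\<beta>' ! (t - m))" "snd (\<beta>' ! (t - m)) \<le> snd (\<beta>' ! n)"
      using \<beta>'(4)[of "t - m"] \<beta>'(6)[of "t - m"] False that by auto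
    ultimately show ?thesis using top \<beta>(5)[of m] by simp
  qed
  ultimately show ?thesis
    using len low[of 0] \<beta>(3) steps by (auto simp: Bridge_def SAW_def)
qed

lemma finite_Bridge: "finite (Bridge k)"
  by (rule finite_subset[OF _ finite_SAW]) (auto simp: Bridge_def)

lemma card_Bridge_mult_le: "card (Bridge m) * card (Bridge n) \<le> card (Bridge (m + n))"
proof -
  have "inj_on (\<lambda>(\<beta>, \<beta>'). walk_concat \<beta> \<beta>') (Bridge m \<times> Bridge n)"
  proof (rule inj_onI, clarify)
    fix \<beta>1 \<beta>1' \<beta>2 \<beta>2' assume "\<beta>1 \<in> Bridge m" "\<beta>1' \<in> Bridge n" "\<beta>2 \<in> Bridge m" "\<beta>2' \<in> Bridge n"
      and eq: "walk_concat \<beta>1 \<beta>1' = walk_concat \<beta>2 \<beta>2'"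
    then have len: "length \<beta>1 = Suc m" "length \<beta>1' = Suc n" "length \<beta>2 = Suc m" "length \<beta>2' = Suc n"
      and z: "\<beta>1' ! 0 = (0, 0)" "\<beta>2' ! 0 = (0, 0)"
      by (simp_all add: BridgeD(2,3))
    have "\<beta>1 = \<beta>2"
      using arg_cong[OF eq, of "take (Suc m)"] len by (simp add: walk_concat_def)
    moreover have "\<beta>1' ! t = \<beta>2' ! t" if "t < Suc n" for t
      using arg_cong[OF eq, of "\<lambda>xs. xs ! (m + t)"] that \<open>\<beta>1 = \<beta>2\<close>
        walk_concat_nth_ge[OF len(1,2) z(1), of "m + t"] walk_concat_nth_ge[OF len(3,4) z(2), of "m + t"]
      by simp
    ultimately show "\<beta>1 = \<beta>2 \<and> \<beta>1' = \<beta>2'" using len by (auto intro: nth_equalityI)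
  qed
  moreover have "(\<lambda>(\<beta>, \<beta>'). walk_concat \<beta> \<beta>') ` (Bridge m \<times> Bridge n) \<subseteq> Bridge (m + n)"
    using walk_concat_Bridge by auto
  ultimately have "card (Bridge m \<times> Bridge n) \<le> card (Bridge (m + n))"
    by (intro card_inj_on_le) (simp_all add: finite_Bridge)
  then show ?thesis by (simp add: card_cartesian_product)
qed

lemma vertical_walk_Bridge: "map (\<lambda>t. (0, int t)) [0..<Suc k] \<in> Bridge k"
  by (auto simp: Bridge_def SAW_def adj_def distinct_map inj_on_def nth_append simp del: upt_Suc)

lemma card_Bridge_pos: "0 < card (Bridge k)"
  using vertical_walk_Bridge finite_Bridge card_gt_0_iff by blast

lemma card_Bridge_le_card_SAW: "card (Bridge k) \<le> card (SAW k)"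
  by (rule card_mono[OF finite_SAW]) (auto simp: Bridge_def)

lemma card_Bridge_pow_le: "card (Bridge m) ^ j \<le> card (Bridge (m * j))"
proof (induction j)
  case 0
  then show ?case using card_Bridge_pos[of 0] by simp
next
  case (Suc j)
  have "card (Bridge m) ^ Suc j \<le> card (Bridge m) * card (Bridge (m * j))" using Suc by simp
  also have "\<dots> \<le> card (Bridge (m + m * j))" by (rule card_Bridge_mult_le)
  finally show ?case by (simp add: algebra_simps)
qed

lemma subadditive_le_mult:
  fixes a :: "nat \<Rightarrow> real"
  assumes "\<And>m n. a (m + n) \<le> a m + a n"
  shows "a (q * m + r) \<le> real q * a m + a r"
proof (induction q)
  case (Suc q)
  have "a (Suc q * m + r) \<le> a m + a (q * m + r)" using assms[of m "q * m + r"] by (simp add: algebra_simps)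
  then show ?case using Suc by (simp add: algebra_simps)
qed simp

lemma subadditive_div_tendsto_Inf:
  fixes a :: "nat \<Rightarrow> real"
  assumes sub: "\<And>m n. a (m + n) \<le> a m + a n" and nonneg: "\<And>n. 0 \<le> a n"
  defines "L \<equiv> Inf ((\<lambda>n. a n / real n) ` {1..})"
  shows "(\<lambda>n. a n / real n) \<longlonglongrightarrow> L"
proof (rule LIMSEQ_I)
  fix e :: real assume e: "0 < e"
  have bdd: "bdd_below ((\<lambda>n. a n / real n) ` {1..})"
    by (rule bdd_belowI[of _ 0]) (auto intro!: divide_nonneg_nonneg nonneg)
  have L_le: "L \<le> a n / real n" if "1 \<le> n" for n
    unfolding L_def by (rule cInf_lower[OF _ bdd]) (use that in auto)
  obtain m where m: "1 \<le> m" "a m / real m < L + e / 2"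
    using cInf_lessD[of "(\<lambda>n. a n / real n) ` {1..}" "L + e / 2"] e unfolding L_def by auto
  define C where "C = Max (a ` {..<m})"
  have C: "a r \<le> C" if "r < m" for r
    unfolding C_def by (rule Max_ge) (use that in auto)
  have "0 \<le> C" using C[of 0] nonneg[of 0] m by simp
  obtain N :: nat where N: "2 * C / e + 1 < N" using reals_Archimedean2 by blast
  have "norm (a n / real n - L) < e" if "N \<le> n" for n
  proof -
    have "2 * C / e + 1 < real n" using N that by (meson of_nat_le_iff order_less_le_trans)
    moreover have "0 \<le> 2 * C / e" using \<open>0 \<le> C\<close> e by simp
    ultimately have "0 < real n" "2 * C / e < real n" by linarith+
    then have n: "0 < real n" "2 * C < e * real n" using e by (simp_all add: pos_divide_less_eq mult.commute)
    define q where "q = n div m"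
    have "real q * real m \<le> real n"
      unfolding q_def of_nat_mult[symmetric] of_nat_le_iff by simp
    then have q: "real q * a m \<le> real n / real m * a m"
      using m(1) nonneg[of m] by (intro mult_right_mono) (simp_all add: field_simps)
    have "a n \<le> real q * a m + a (n mod m)"
      using subadditive_le_mult[of a q m "n mod m", OF sub] by (simp add: q_def)
    also have "\<dots> \<le> real n / real m * a m + C" using q C[of "n mod m"] m(1) by simp
    finally have "a n / real n \<le> a m / real m + C / real n" using n by (simp add: field_simps)
    moreover have "C / real n < e / 2" using n by (simp add: field_simps)
    ultimately have "a n / real n - L < e" using m(2) by linarith
    then show ?thesis using L_le[of n] n by simp
  qed
  then show "\<exists>N. \<forall>n\<ge>N. norm (a n / real n - L) < e" by blast
qed

lemma conn_const_exp_limit: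
  obtains L where "(\<lambda>n. ln (real (card (SAW n))) / real n) \<longlonglongrightarrow> L" "conn_const = exp L"
proof -
  define a where "a = (\<lambda>n. ln (real (card (SAW n))))"
  have pos: "0 < real (card (SAW n))" for n
    using card_Bridge_pos[of n] card_Bridge_le_card_SAW[of n] by simp
  have "a (m + n) \<le> a m + a n" for m n
  proof -
    have "real (card (SAW (m + n))) \<le> real (card (SAW m)) * real (card (SAW n))"
      using card_SAW_add_le[of m n] by (metis of_nat_le_iff of_nat_mult)
    then have "ln (real (card (SAW (m + n)))) \<le> ln (real (card (SAW m)) * real (card (SAW n)))"
      using pos by (subst ln_le_cancel_iff) auto
    then show ?thesis using pos by (simp add: a_def ln_mult)
  qed
  moreover have "0 \<le> a n" for n using pos[of n] by (simp add: a_def)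
  ultimately obtain L where L: "(\<lambda>n. a n / real n) \<longlonglongrightarrow> L"
    using subadditive_div_tendsto_Inf by blast
  have "\<forall>\<^sub>F n in sequentially. exp (a n / real n) = root n (real (card (SAW n)))"
    using eventually_ge_at_top[of 1] by eventually_elim (use pos in \<open>simp add: root_powr_inverse powr_def a_def\<close>)
  then have "(\<lambda>n. root n (real (card (SAW n)))) \<longlonglongrightarrow> exp L"
    by (rule Lim_transform_eventually[OF tendsto_exp[OF L]])
  then have "conn_const = exp L" unfolding conn_const_def by (rule limI)
  then show ?thesis using that L by (simp add: a_def)
qed

lemma ln_card_Bridge_pow_le: "real j * ln (real (card (Bridge m))) \<le> ln (real (card (SAW (m * j))))"
proof -
  have "card (Bridge m) ^ j \<le> card (SAW (m * j))"
    using card_Bridge_pow_le card_Bridge_le_card_SAW by (rule le_trans)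
  then have "real (card (Bridge m)) ^ j \<le> real (card (SAW (m * j)))"
    unfolding of_nat_power[symmetric] of_nat_le_iff .
  moreover have "0 < real (card (Bridge m)) ^ j" using card_Bridge_pos[of m] by simp
  ultimately have "ln (real (card (Bridge m)) ^ j) \<le> ln (real (card (SAW (m * j))))"
    by (rule ln_mono)
  then show ?thesis using card_Bridge_pos[of m] by (simp add: ln_realpow)
qed

lemma conn_const_pos: "0 < conn_const"
  by (metis conn_const_exp_limit exp_gt_zero)

lemma card_Bridge_le_conn_const_pow: "real (card (Bridge m)) \<le> conn_const ^ m"
proof (cases "m = 0")
  case True
  then show ?thesis using card_Bridge_le_card_SAW[of 0] by (simp add: SAW_0)
next
  case False
  obtain L where L: "(\<lambda>n. ln (real (card (SAW n))) / real n) \<longlonglongrightarrow> L" and mu: "conn_const = exp L"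
    by (rule conn_const_exp_limit)
  define b where "b = real (card (Bridge m))"
  have "1 \<le> b" using card_Bridge_pos[of m] by (simp add: b_def)
  have "strict_mono (\<lambda>j. m * Suc j)" using False by (auto simp: strict_mono_def)
  then have "(\<lambda>j. ln (real (card (SAW (m * Suc j)))) / real (m * Suc j)) \<longlonglongrightarrow> L"
    by (rule LIMSEQ_subseq_LIMSEQ[OF L, unfolded comp_def])
  moreover have "ln b / real m \<le> ln (real (card (SAW (m * Suc j)))) / real (m * Suc j)" for j
  proof -
    have "real (Suc j) * ln b \<le> ln (real (card (SAW (m * Suc j))))"
      using ln_card_Bridge_pow_le[of "Suc j" m] by (simp add: b_def del: of_nat_Suc)
    then have "real (Suc j) * ln b / real (m * Suc j) \<le> ln (real (card (SAW (m * Suc j)))) / real (m * Suc j)"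
      by (rule divide_right_mono) simp
    moreover have "real (Suc j) * ln b / real (m * Suc j) = ln b / real m"
      by (simp only: of_nat_mult) (simp del: of_nat_Suc)
    ultimately show ?thesis by simp
  qed
  ultimately have "ln b / real m \<le> L" by (intro LIMSEQ_le_const) auto
  then have "ln b \<le> real m * L" using False by (simp add: pos_divide_le_eq mult.commute)
  have "b = exp (ln b)" using \<open>1 \<le> b\<close> by simp
  also have "\<dots> \<le> exp (real m * L)" using \<open>ln b \<le> real m * L\<close> by simp
  finally show ?thesis by (simp add: b_def mu exp_of_nat_mult)
qed

lemma sum_power_le_Suc_power: "(\<Sum>i\<le>N. x ^ i) \<le> (x + 1 :: nat) ^ N"
proof -
  have "(\<Sum>i\<le>N. x ^ i) \<le> (\<Sum>i\<le>N. (N choose i) * x ^ i * 1 ^ (N - i))"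
    by (intro sum_mono) (simp add: Suc_le_eq)
  also have "\<dots> = (x + 1) ^ N" by (simp only: binomial of_nat_id)
  finally show ?thesis .
qed

lemma card_HSW_few_branches_le:
  "card {\<gamma> \<in> HSW k. num_branches \<gamma> \<le> N} \<le> (k + 2) ^ N * card (Bridge k)"
proof -
  let ?S = "{\<gamma> \<in> HSW k. num_branches \<gamma> \<le> N}"
  let ?L = "{xs. set xs \<subseteq> {0..k} \<and> length xs \<le> N}"
  let ?code = "\<lambda>\<gamma>. (branch_points \<gamma>, unfold_branches \<gamma>)"
  have "?code ` ?S \<subseteq> ?L \<times> Bridge k"
  proof (rule image_subsetI)
    fix \<gamma> assume "\<gamma> \<in> ?S"
    then have "\<gamma> \<in> HSW k" "num_branches \<gamma> \<le> N" "length \<gamma> = Suc k"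
      using SAWD(1) by (auto simp: HSW_def)
    then show "?code \<gamma> \<in> ?L \<times> Bridge k"
      using bpt_le_last[of \<gamma>] unfold_branches_Bridge by (auto simp: branch_points_def)
  qed
  moreover have "inj_on ?code ?S"
    by (rule inj_onI) (auto simp: HSW_def intro: unfold_branches_inj)
  ultimately have "card ?S \<le> card (?L \<times> Bridge k)"
    by (intro card_inj_on_le) (simp_all add: finite_lists_length_le finite_Bridge)
  also have "\<dots> = (\<Sum>i\<le>N. Suc k ^ i) * card (Bridge k)"
    by (simp add: card_cartesian_product card_lists_length_le)
  also have "\<dots> \<le> (k + 2) ^ N * card (Bridge k)"
    using sum_power_le_Suc_power[of "Suc k" N] by simp
  finally show ?thesis .
qed

lemma card_few_branches_le:
  assumes "S \<subseteq> HSW k" "\<And>\<gamma>. \<gamma> \<in> S \<Longrightarrow> num_branches \<gamma> \<le> N"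
  shows "real (card S) \<le> (real k + 2) ^ N * conn_const ^ k"
proof -
  have "finite {\<gamma> \<in> HSW k. num_branches \<gamma> \<le> N}"
    by (rule finite_subset[OF _ finite_SAW]) (auto simp: HSW_def)
  then have "card S \<le> card {\<gamma> \<in> HSW k. num_branches \<gamma> \<le> N}"
    by (rule card_mono) (use assms in auto)
  also have "\<dots> \<le> (k + 2) ^ N * card (Bridge k)" by (rule card_HSW_few_branches_le)
  finally have "real (card S) \<le> real ((k + 2) ^ N * card (Bridge k))"
    by (simp only: of_nat_le_iff)
  also have "\<dots> = (real k + 2) ^ N * real (card (Bridge k))" by (simp add: ac_simps)
  also have "\<dots> \<le> (real k + 2) ^ N * conn_const ^ k"
    by (intro mult_left_mono card_Bridge_le_conn_const_pow) simp
  finally show ?thesis .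
qed

lemma eventually_powr_ln_le:
  fixes a :: real
  assumes "0 < a"
  shows "\<forall>\<^sub>F n in sequentially. 7 * real n powr a * ln (real n + 2) \<le> 8 * real n powr a * ln (real n)"
  using assms by real_asymp

theorem mainTheorem9:
  fixes \<epsilon> :: real
  assumes "0 < \<epsilon>" and "\<epsilon> < 1/2"
  shows "\<forall>\<^sub>F n in sequentially. \<forall>k\<le>n.
           real (card (FewBranchHSW \<epsilon> n k))
             \<le> exp (8 * real n powr (1/2 - \<epsilon>) * ln (real n)) * conn_const ^ k"
proof -
  let ?p = "\<lambda>n. real n powr (1/2 - \<epsilon>)"
  have "0 < 1/2 - \<epsilon>" using assms by simp
  from eventually_powr_ln_le[OF this] show ?thesis
  proof (rule eventually_mono, intro allI impI)
    fix n k :: nat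
    assume growth: "7 * ?p n * ln (real n + 2) \<le> 8 * ?p n * ln (real n)" and "k \<le> n"
    define N where "N = nat \<lfloor>7 * ?p n\<rfloor>"
    have "(real k + 2) ^ N \<le> (real n + 2) ^ N" using \<open>k \<le> n\<close> by (intro power_mono) auto
    also have "\<dots> = exp (real N * ln (real n + 2))" by (simp add: exp_of_nat_mult)
    also have "\<dots> \<le> exp (7 * ?p n * ln (real n + 2))" by (simp add: N_def of_nat_floor mult_right_mono)
    also have "\<dots> \<le> exp (8 * ?p n * ln (real n))" using growth by simp
    finally have factor: "(real k + 2) ^ N \<le> exp (8 * ?p n * ln (real n))" .
    have "real (card (FewBranchHSW \<epsilon> n k)) \<le> (real k + 2) ^ N * conn_const ^ k"
      by (rule card_few_branches_le) (auto simp: FewBranchHSW_def N_def intro: le_nat_floor)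
    also have "\<dots> \<le> exp (8 * ?p n * ln (real n)) * conn_const ^ k"
      using factor conn_const_pos by (simp add: mult_right_mono)
    finally show "real (card (FewBranchHSW \<epsilon> n k)) \<le> exp (8 * ?p n * ln (real n)) * conn_const ^ k" .
  qed
qed

end
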